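(* Let a binary game be given as described in the context, and suppose Assumptions (A1) and (A2) hold. (i) If $\big(x_i,y_i,\widetilde y_i^{(1)},\widetilde y_i^{(0)},\widetilde\lambda_i^{(1)},\widetilde\lambda_i^{(0)},\kappa_i^{(1)},\kappa_i^{(0)},\zeta_i^{(1)},\zeta_i^{(0)}\big)_{i\in I}$ is an optimal solution of problem (P), then $(x_i,y_i)_{i\in I}$ with compensation $(\zeta_i)_{i\in I}$, $\zeta_i=\zeta_i^{(1)}+\zeta_i^{(0)}$, is a binary quasi-equilibrium. (ii) Conversely, if $(x_i,y_i)_{i\in I}$ with compensation $(\zeta_i)_{i\in I}$ is a binary quasi-equilibrium, then there exist vectors $\big(\widetilde y_i^{(1)},\widetilde y_i^{(0)},\widetilde\lambda_i^{(1)},\widetilde\lambda_i^{(0)},\kappa_i^{(1)},\kappa_i^{(0)},\zeta_i^{(1)},\zeta_i^{(0)}\big)_{i\in I}$ such that the combined point is feasible for problem (P).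
   Context: Binary game: players $i\in I=\{1,\dots,n\}$. Player $i$ chooses $x_i\in\{0,1\}$ and $y_i\in\mathbb{R}^m$ and solves $\min f_i(x_i,y_i,y_{-i})$ subject to $g_i(x_i,y_i)\le 0$, with $g_i:\{0,1\}\times\mathbb{R}^m\to\mathbb{R}^k$, $y_{-i}=(y_j)_{j\ne i}$; $K_i=\{(x_i,y_i):g_i(x_i,y_i)\le0\}$. Binary quasi-equilibrium: a vector $((x_i^*,y_i^* )\in K_i)_{i\in I}$ and compensations $\zeta_i\ge0$ such that for every $i$: (1) $y_i^*$ minimizes $f_i(x_i^*,\cdot,y_{-i}^* )$ over $\{y_i:g_i(x_i^*,y_i)\le0\}$; (2) $f_i(x_i^*,y_i^*,y_{-i}^* )-\zeta_i\le f_i(x_i^\times,y_i^\times,y_{-i}^* )$, where $x_i^\times=1-x_i^*$ and $y_i^\times$ minimizes $f_i(x_i^\times,\cdot,y_{-i}^* )$ over $\{y_i:g_i(x_i^\times,y_i)\le0\}$; (3) $\zeta_i$ is the minimal nonnegative number satisfying (2). Assumption (A1): for each $i$ and each fixed $x_i$ (and fixed $y_{-i}$), the KKT conditions of player $i$'s problem with respect to $y_i$ are necessary and sufficient, and $\{y_i:g_i(x_i,y_i)\le0\}$ is compact and non-empty. Assumption (A2): $F$ and $G$ (below) are convex quadratic or linear functions for every fixed value of the binary variables, and $\partial G/\partial\zeta_i>0$ for all $i$. Problem (P): with a sufficiently large constant $\widetilde K>0$ (larger than the difference between any upper and lower bounds on each $y_i$ and than the difference between maximum and minimum of each $f_i$),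 minimize $F((x_i,y_i)_{i\in I})+G((\zeta_i^{(1)},\zeta_i^{(0)})_{i\in I})$ over $x_i\in\{0,1\}$, $y_i,\widetilde y_i^{(1)},\widetilde y_i^{(0)}\in\mathbb{R}^m$, $\widetilde\lambda_i^{(1)},\widetilde\lambda_i^{(0)}\in\mathbb{R}^k_+$, $\kappa_i^{(1)},\kappa_i^{(0)},\zeta_i^{(1)},\zeta_i^{(0)}\in\mathbb{R}_+$, subject to, for all $i$ and $b\in\{0,1\}$: $\nabla_{y_i} f_i(b,\widetilde y_i^{(b)},y_{-i})+(\widetilde\lambda_i^{(b)})^T\nabla_{y_i} g_i(b,\widetilde y_i^{(b)})=0$; $0\le -g_i(b,\widetilde y_i^{(b)})\perp\widetilde\lambda_i^{(b)}\ge0$; $f_i(1,\widetilde y_i^{(1)},y_{-i})+\kappa_i^{(1)}-\zeta_i^{(1)}-\kappa_i^{(0)}+\zeta_i^{(0)}=f_i(0,\widetilde y_i^{(0)},y_{-i})$; $\kappa_i^{(1)}+\zeta_i^{(1)}\le x_i\widetilde K$; $\kappa_i^{(0)}+\zeta_i^{(0)}\le(1-x_i)\widetilde K$; $\widetilde y_i^{(0)}-x_i\widetilde K\le y_i\le\widetilde y_i^{(0)}+x_i\widetilde K$; $\widetilde y_i^{(1)}-(1-x_i)\widetilde K\le y_i\le\widetilde y_i^{(1)}+(1-x_i)\widetilde K$. *)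

theory Defs
  imports "HOL-Analysis.Analysis"
begin

text \<open>Players are the elements of a finite type 'p; strategy vectors y_i live in real^'m,
  constraint values g_i in real^'k. Binary decisions are booleans (True = 1, False = 0).\<close>

definition minus_i :: "real^'m^'p \<Rightarrow> 'p \<Rightarrow> real^'m^'p" where
  "minus_i y i = (\<chi> j. if j = i then 0 else y $ j)"

definition feas ::
  "('p \<Rightarrow> bool \<Rightarrow> real^'m \<Rightarrow> real^'k) \<Rightarrow> 'p \<Rightarrow> bool \<Rightarrow> (real^'m) set" where
  "feas g i b = {z. \<forall>l. g i b z $ l \<le> 0}"

definition is_minimizer ::
  "('p \<Rightarrow> bool \<Rightarrow> real^'m \<Rightarrow> real^'m^'p \<Rightarrow> real) \<Rightarrow>
   ('p \<Rightarrow> bool \<Rightarrow> real^'m \<Rightarrow> real^'k) \<Rightarrow> 'p \<Rightarrow> bool \<Rightarrow> real^'m^'p \<Rightarrow> real^'m \<Rightarrow> bool" where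
  "is_minimizer f g i b yo z \<longleftrightarrow>
     z \<in> feas g i b \<and> (\<forall>z'\<in>feas g i b. f i b z yo \<le> f i b z' yo)"

text \<open>KKT conditions of player i's problem in y_i (binary b fixed, y_{-i} = yo fixed):
  stationarity of the Lagrangian (gradients as Frechet derivatives), primal feasibility,
  dual feasibility and complementarity.\<close>
definition kkt ::
  "('p \<Rightarrow> bool \<Rightarrow> real^'m \<Rightarrow> real^'m^'p \<Rightarrow> real) \<Rightarrow>
   ('p \<Rightarrow> bool \<Rightarrow> real^'m \<Rightarrow> real^'k) \<Rightarrow> 'p \<Rightarrow> bool \<Rightarrow> real^'m^'p \<Rightarrow> real^'m \<Rightarrow> real^'k \<Rightarrow> bool" where
  "kkt f g i b yo z lam \<longleftrightarrow>
     (\<exists>Df Dg. ((\<lambda>w. f i b w yo) has_derivative Df) (at z) \<and>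
        (\<forall>l. ((\<lambda>w. g i b w $ l) has_derivative Dg l) (at z)) \<and>
        (\<forall>h. Df h + (\<Sum>l\<in>UNIV. lam $ l * Dg l h) = 0)) \<and>
     (\<forall>l. 0 \<le> - (g i b z $ l) \<and> 0 \<le> lam $ l \<and> (- (g i b z $ l)) * lam $ l = 0)"

definition A1 ::
  "('p \<Rightarrow> bool \<Rightarrow> real^'m \<Rightarrow> real^'m^'p \<Rightarrow> real) \<Rightarrow>
   ('p \<Rightarrow> bool \<Rightarrow> real^'m \<Rightarrow> real^'k) \<Rightarrow> bool" where
  "A1 f g \<longleftrightarrow> (\<forall>i b y.
     compact (feas g i b) \<and> feas g i b \<noteq> {} \<and>
     (\<forall>z. is_minimizer f g i b (minus_i y i) z \<longleftrightarrow> (\<exists>lam. kkt f g i b (minus_i y i) z lam)))"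

definition convex_quadratic_or_linear :: "('a::real_vector \<Rightarrow> real) \<Rightarrow> bool" where
  "convex_quadratic_or_linear q \<longleftrightarrow> convex_on UNIV q \<and>
     (\<exists>B L d. bilinear B \<and> linear L \<and> (\<forall>v. q v = B v v + L v + d))"

definition A2 ::
  "(('p \<Rightarrow> bool) \<Rightarrow> real^'m^'p \<Rightarrow> real) \<Rightarrow> (real^'p \<Rightarrow> real^'p \<Rightarrow> real) \<Rightarrow> bool" where
  "A2 F G \<longleftrightarrow> (\<forall>x. convex_quadratic_or_linear (F x)) \<and>
     convex_quadratic_or_linear (\<lambda>(z1, z0). G z1 z0) \<and>
     (\<forall>z1 z0. (\<forall>j. 0 \<le> z1 $ j \<and> 0 \<le> z0 $ j) \<longrightarrow>
        (\<exists>D. ((\<lambda>(a, b). G a b) has_derivative D) (at (z1, z0)) \<and>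
             (\<forall>i. D (axis i 1, 0) > 0 \<and> D (0, axis i 1) > 0)))"

definition binary_quasi_eq ::
  "('p \<Rightarrow> bool \<Rightarrow> real^'m \<Rightarrow> real^'m^'p \<Rightarrow> real) \<Rightarrow>
   ('p \<Rightarrow> bool \<Rightarrow> real^'m \<Rightarrow> real^'k) \<Rightarrow>
   ('p \<Rightarrow> bool) \<Rightarrow> real^'m^'p \<Rightarrow> real^'p \<Rightarrow> bool" where
  "binary_quasi_eq f g x y zeta \<longleftrightarrow> (\<forall>i.
     y $ i \<in> feas g i (x i) \<and> 0 \<le> zeta $ i \<and>
     is_minimizer f g i (x i) (minus_i y i) (y $ i) \<and>
     (\<exists>yx. is_minimizer f g i (\<not> x i) (minus_i y i) yx \<and>
        f i (x i) (y $ i) (minus_i y i) - zeta $ i \<le> f i (\<not> x i) yx (minus_i y i) \<and>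
        (\<forall>z'. 0 \<le> z' \<and> f i (x i) (y $ i) (minus_i y i) - z' \<le> f i (\<not> x i) yx (minus_i y i)
               \<longrightarrow> zeta $ i \<le> z')))"

text \<open>Feasibility for problem (P). The auxiliary variables indexed by b :: bool
  (True = superscript (1), False = superscript (0)).\<close>
definition P_feasible ::
  "('p \<Rightarrow> bool \<Rightarrow> real^'m \<Rightarrow> real^'m^'p \<Rightarrow> real) \<Rightarrow>
   ('p \<Rightarrow> bool \<Rightarrow> real^'m \<Rightarrow> real^'k) \<Rightarrow> real \<Rightarrow>
   ('p \<Rightarrow> bool) \<Rightarrow> real^'m^'p \<Rightarrow> (bool \<Rightarrow> real^'m^'p) \<Rightarrow> (bool \<Rightarrow> real^'k^'p) \<Rightarrow>
   (bool \<Rightarrow> real^'p) \<Rightarrow> (bool \<Rightarrow> real^'p) \<Rightarrow> bool" where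
  "P_feasible f g K x y yt lam kap zet \<longleftrightarrow> (\<forall>i.
     (\<forall>b. kkt f g i b (minus_i y i) (yt b $ i) (lam b $ i) \<and>
          0 \<le> kap b $ i \<and> 0 \<le> zet b $ i) \<and>
     f i True (yt True $ i) (minus_i y i) + kap True $ i - zet True $ i
       - kap False $ i + zet False $ i = f i False (yt False $ i) (minus_i y i) \<and>
     kap True $ i + zet True $ i \<le> of_bool (x i) * K \<and>
     kap False $ i + zet False $ i \<le> (1 - of_bool (x i)) * K \<and>
     (\<forall>l. yt False $ i $ l - of_bool (x i) * K \<le> y $ i $ l \<and>
          y $ i $ l \<le> yt False $ i $ l + of_bool (x i) * K) \<and>
     (\<forall>l. yt True $ i $ l - (1 - of_bool (x i)) * K \<le> y $ i $ l \<and>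
          y $ i $ l \<le> yt True $ i $ l + (1 - of_bool (x i)) * K))"

definition P_objective ::
  "(('p \<Rightarrow> bool) \<Rightarrow> real^'m^'p \<Rightarrow> real) \<Rightarrow> (real^'p \<Rightarrow> real^'p \<Rightarrow> real) \<Rightarrow>
   ('p \<Rightarrow> bool) \<Rightarrow> real^'m^'p \<Rightarrow> (bool \<Rightarrow> real^'p) \<Rightarrow> real" where
  "P_objective F G x y zet = F x y + G (zet True) (zet False)"

definition P_optimal where
  "P_optimal f g K F G x y yt lam kap zet \<longleftrightarrow>
     P_feasible f g K x y yt lam kap zet \<and>
     (\<forall>x' y' yt' lam' kap' zet'. P_feasible f g K x' y' yt' lam' kap' zet' \<longrightarrow>
        P_objective F G x y zet \<le> P_objective F G x' y' zet')"

definition K_large ::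
  "('p \<Rightarrow> bool \<Rightarrow> real^'m \<Rightarrow> real^'m^'p \<Rightarrow> real) \<Rightarrow>
   ('p \<Rightarrow> bool \<Rightarrow> real^'m \<Rightarrow> real^'k) \<Rightarrow> real \<Rightarrow> bool" where
  "K_large f g K \<longleftrightarrow> 0 < K \<and> (\<forall>i b b' z z'. z \<in> feas g i b \<longrightarrow> z' \<in> feas g i b' \<longrightarrow>
     (\<forall>l. \<bar>z $ l - z' $ l\<bar> < K) \<and>
     (\<forall>y. (\<forall>j. \<exists>c. y $ j \<in> feas g j c) \<longrightarrow>
        \<bar>f i b z (minus_i y i) - f i b' z' (minus_i y i)\<bar> < K))"

end

theory Submission
  imports Defs
begin

text \<open>On the branch b = x_i the constraints of (P) force \<open>\<kappa>\<close> and \<open>\<zeta>\<close> of the other branch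
  to vanish and y_i to be the KKT point of branch x_i; the balance equation then reads
  f_i(x_i, y_i) - \<zeta>_i = f_i(1 - x_i, y_i^\<times>) - \<kappa>_i. Since G strictly increases in every
  \<open>\<zeta>\<close>, an optimal solution cannot have \<open>\<kappa>\<close> and \<open>\<zeta>\<close> both positive on a branch (lowering both
  keeps feasibility), so \<open>\<zeta>\<close> is exactly the minimal compensation. Conversely, from a
  quasi-equilibrium one splits f_i(x_i, y_i) - f_i(1 - x_i, y_i^\<times>) into its positive part
  (\<open>\<zeta>\<close>) and negative part (\<open>\<kappa>\<close>); the size of \<open>K\<close> makes all big-M constraints hold.\<close>

lemma has_derivative_pos_descent:
  fixes H :: "'a::real_normed_vector \<Rightarrow> real"
  assumes "(H has_derivative D) (at p)" and "D v > 0"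
  shows "\<exists>d>0. \<forall>h>0. h < d \<longrightarrow> H (p - h *\<^sub>R v) < H p"
proof -
  have line: "((\<lambda>t::real. p + t *\<^sub>R v) has_derivative (\<lambda>t. t *\<^sub>R v)) (at 0)"
    by (auto intro!: derivative_eq_intros)
  have "((\<lambda>t. H (p + t *\<^sub>R v)) has_derivative (\<lambda>t. D (t *\<^sub>R v))) (at 0)"
    using has_derivative_compose[OF line] assms(1) by (simp add: o_def)
  moreover have "(\<lambda>t. D (t *\<^sub>R v)) = (*) (D v)"
    using has_derivative_linear[OF assms(1)] by (auto simp: linear_scale)
  ultimately have "((\<lambda>t. H (p + t *\<^sub>R v)) has_real_derivative D v) (at 0)"
    by (simp add: has_field_derivative_def)
  from DERIV_pos_inc_left[OF this assms(2)] show ?thesis by simp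
qed

lemma balance_active_branch_iff:
  fixes \<phi> kap zet :: "bool \<Rightarrow> real"
  assumes "kap (\<not> b) = 0" and "zet (\<not> b) = 0"
  shows "\<phi> True + kap True - zet True - kap False + zet False = \<phi> False \<longleftrightarrow>
         \<phi> b - zet b = \<phi> (\<not> b) - kap b"
  using assms by (cases b) auto

lemma P_feasible_inactive_zero:
  assumes "P_feasible f g K x y yt lam kap zet"
  shows "kap (\<not> x i) $ i = 0" and "zet (\<not> x i) $ i = 0"
proof -
  have "0 \<le> kap True $ i" "0 \<le> zet True $ i" "0 \<le> kap False $ i" "0 \<le> zet False $ i"
    using assms unfolding P_feasible_def by blast+
  moreover have "kap True $ i + zet True $ i \<le> of_bool (x i) * K"
    and "kap False $ i + zet False $ i \<le> (1 - of_bool (x i)) * K"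
    using assms unfolding P_feasible_def by blast+
  ultimately show "kap (\<not> x i) $ i = 0" and "zet (\<not> x i) $ i = 0"
    by (cases "x i"; simp; linarith)+
qed

lemma P_feasible_active_strategy:
  assumes "P_feasible f g K x y yt lam kap zet"
  shows "y $ i = yt (x i) $ i"
proof -
  have "\<forall>l. yt False $ i $ l - of_bool (x i) * K \<le> y $ i $ l \<and>
          y $ i $ l \<le> yt False $ i $ l + of_bool (x i) * K"
    and "\<forall>l. yt True $ i $ l - (1 - of_bool (x i)) * K \<le> y $ i $ l \<and>
          y $ i $ l \<le> yt True $ i $ l + (1 - of_bool (x i)) * K"
    using assms unfolding P_feasible_def by blast+
  then show ?thesis
    by (cases "x i") (auto simp: vec_eq_iff intro: order_antisym)
qed

lemma P_feasible_active_balance: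
  assumes "P_feasible f g K x y yt lam kap zet"
  shows "f i (x i) (y $ i) (minus_i y i) - zet (x i) $ i =
         f i (\<not> x i) (yt (\<not> x i) $ i) (minus_i y i) - kap (x i) $ i"
proof -
  have "f i True (yt True $ i) (minus_i y i) + kap True $ i - zet True $ i
          - kap False $ i + zet False $ i = f i False (yt False $ i) (minus_i y i)"
    using assms unfolding P_feasible_def by blast
  then show ?thesis
    using balance_active_branch_iff[of "\<lambda>b. kap b $ i" "x i" "\<lambda>b. zet b $ i"
        "\<lambda>b. f i b (yt b $ i) (minus_i y i)"]
      P_feasible_inactive_zero[OF assms] P_feasible_active_strategy[OF assms]
    by simp
qed

lemma P_feasible_minimizer:
  assumes "A1 f g" and "P_feasible f g K x y yt lam kap zet"
  shows "is_minimizer f g i b (minus_i y i) (yt b $ i)"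
  using assms unfolding A1_def P_feasible_def by blast

lemma P_feasibleI:
  assumes kkt: "\<And>i b. kkt f g i b (minus_i y i) (yt b $ i) (lam b $ i)"
    and active: "\<And>i. yt (x i) $ i = y $ i"
    and inactive: "\<And>i. kap (\<not> x i) $ i = 0 \<and> zet (\<not> x i) $ i = 0"
    and nonneg: "\<And>i. 0 \<le> kap (x i) $ i \<and> 0 \<le> zet (x i) $ i"
    and bound: "\<And>i. kap (x i) $ i + zet (x i) $ i \<le> K"
    and balance: "\<And>i. f i (x i) (y $ i) (minus_i y i) - zet (x i) $ i =
                        f i (\<not> x i) (yt (\<not> x i) $ i) (minus_i y i) - kap (x i) $ i"
    and spread: "\<And>i b l. \<bar>yt b $ i $ l - y $ i $ l\<bar> \<le> K"
  shows "P_feasible f g K x y yt lam kap zet"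
  unfolding P_feasible_def
proof (rule allI, intro conjI)
  fix i
  have nonneg_all: "0 \<le> kap b $ i \<and> 0 \<le> zet b $ i" for b
    using nonneg[of i] inactive[of i] by (cases "b = x i") auto
  then show "\<forall>b. kkt f g i b (minus_i y i) (yt b $ i) (lam b $ i) \<and>
      0 \<le> kap b $ i \<and> 0 \<le> zet b $ i"
    using kkt by blast
  show "f i True (yt True $ i) (minus_i y i) + kap True $ i - zet True $ i
      - kap False $ i + zet False $ i = f i False (yt False $ i) (minus_i y i)"
    using balance_active_branch_iff[of "\<lambda>b. kap b $ i" "x i" "\<lambda>b. zet b $ i"
        "\<lambda>b. f i b (yt b $ i) (minus_i y i)"] inactive[of i] balance[of i] active[of i]
    by simp
  show "kap True $ i + zet True $ i \<le> of_bool (x i) * K"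
    and "kap False $ i + zet False $ i \<le> (1 - of_bool (x i)) * K"
    using bound[of i] inactive[of i] by (cases "x i"; simp)+
  have gap: "\<bar>yt b $ i $ l - y $ i $ l\<bar> \<le> of_bool (b \<noteq> x i) * K" for b l
    using spread[of b i l] active[of i] by (cases "b = x i") auto
  show "\<forall>l. yt False $ i $ l - of_bool (x i) * K \<le> y $ i $ l \<and>
           y $ i $ l \<le> yt False $ i $ l + of_bool (x i) * K"
  proof
    fix l show "yt False $ i $ l - of_bool (x i) * K \<le> y $ i $ l \<and>
        y $ i $ l \<le> yt False $ i $ l + of_bool (x i) * K"
      using gap[of False l] by (cases "x i") (simp_all add: abs_le_iff)
  qed
  show "\<forall>l. yt True $ i $ l - (1 - of_bool (x i)) * K \<le> y $ i $ l \<and>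
           y $ i $ l \<le> yt True $ i $ l + (1 - of_bool (x i)) * K"
  proof
    fix l show "yt True $ i $ l - (1 - of_bool (x i)) * K \<le> y $ i $ l \<and>
        y $ i $ l \<le> yt True $ i $ l + (1 - of_bool (x i)) * K"
      using gap[of True l] by (cases "x i") (simp_all add: abs_le_iff)
  qed
qed

lemma P_feasible_lower_both:
  assumes "P_feasible f g K x y yt lam kap zet" and "0 \<le> h"
    and "h \<le> kap b $ i" and "h \<le> zet b $ i"
  shows "P_feasible f g K x y yt lam (kap(b := kap b - h *\<^sub>R axis i 1))
           (zet(b := zet b - h *\<^sub>R axis i 1))"
  unfolding P_feasible_def
  apply (rule allI)
  subgoal for j
    using spec[OF assms(1)[unfolded P_feasible_def], of j] assms(2-4)
    by (cases "j = i"; cases b) (auto simp: axis_def)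
  done

lemma P_optimal_not_both_pos:
  fixes G :: "real^'p::finite \<Rightarrow> real^'p \<Rightarrow> real"
  assumes opt: "P_optimal f g K F G x y yt lam kap zet" and "A2 F G"
  shows "\<not> (0 < kap b $ i \<and> 0 < zet b $ i)"
proof
  assume pos: "0 < kap b $ i \<and> 0 < zet b $ i"
  have feas: "P_feasible f g K x y yt lam kap zet"
    using opt unfolding P_optimal_def by blast
  then have "\<forall>j. 0 \<le> zet True $ j \<and> 0 \<le> zet False $ j"
    unfolding P_feasible_def by blast
  then obtain D where D: "((\<lambda>(a, b). G a b) has_derivative D) (at (zet True, zet False))"
    and D_pos: "\<forall>i. D (axis i 1, 0) > 0 \<and> D (0, axis i 1) > 0"
    using \<open>A2 F G\<close> unfolding A2_def by blast
  define v :: "(real^'p) \<times> (real^'p)" where "v = (if b then (axis i 1, 0) else (0, axis i 1))"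
  have "D v > 0" using D_pos by (simp add: v_def)
  from has_derivative_pos_descent[OF D this] obtain d where "d > 0"
    and descent: "\<forall>h>0. h < d \<longrightarrow>
       (\<lambda>(a, b). G a b) ((zet True, zet False) - h *\<^sub>R v) < G (zet True) (zet False)"
    by auto
  define h where "h = min (min (kap b $ i) (zet b $ i)) (d / 2)"
  have h: "0 < h" "h < d" "h \<le> kap b $ i" "h \<le> zet b $ i"
    using pos \<open>d > 0\<close> by (auto simp: h_def)
  define zet' where "zet' = zet(b := zet b - h *\<^sub>R axis i 1)"
  have "P_feasible f g K x y yt lam (kap(b := kap b - h *\<^sub>R axis i 1)) zet'"
    unfolding zet'_def using P_feasible_lower_both[OF feas] h by simp
  then have "G (zet True) (zet False) \<le> G (zet' True) (zet' False)"
    using opt unfolding P_optimal_def P_objective_def by fastforce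
  moreover have "(zet True, zet False) - h *\<^sub>R v = (zet' True, zet' False)"
    by (cases b) (auto simp: zet'_def v_def)
  ultimately show False
    using descent h by fastforce
qed

lemma binary_quasi_eq_if_P_optimal:
  fixes G :: "real^'p::finite \<Rightarrow> real^'p \<Rightarrow> real"
  assumes "A1 f g" and "A2 F G" and opt: "P_optimal f g K F G x y yt lam kap zet"
  shows "binary_quasi_eq f g x y (zet True + zet False)"
  unfolding binary_quasi_eq_def
proof
  fix i
  let ?f = "\<lambda>b z. f i b z (minus_i y i)" and ?\<kappa> = "kap (x i) $ i" and ?\<zeta> = "zet (x i) $ i"
  have feas: "P_feasible f g K x y yt lam kap zet"
    using opt unfolding P_optimal_def by blast
  have min: "is_minimizer f g i b (minus_i y i) (yt b $ i)" for b
    by (rule P_feasible_minimizer[OF \<open>A1 f g\<close> feas])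
  have y_active: "y $ i = yt (x i) $ i"
    by (rule P_feasible_active_strategy[OF feas])
  have zeta: "(zet True + zet False) $ i = ?\<zeta>"
    using P_feasible_inactive_zero[OF feas, of i] by (cases "x i") auto
  have nonneg: "0 \<le> ?\<kappa>" "0 \<le> ?\<zeta>"
    using feas unfolding P_feasible_def by blast+
  have balance: "?f (x i) (y $ i) - ?\<zeta> = ?f (\<not> x i) (yt (\<not> x i) $ i) - ?\<kappa>"
    by (rule P_feasible_active_balance[OF feas])
  have not_both: "\<not> (0 < ?\<kappa> \<and> 0 < ?\<zeta>)"
    by (rule P_optimal_not_both_pos[OF opt \<open>A2 F G\<close>])
  have least: "?\<zeta> \<le> z'"
    if "0 \<le> z'" and "?f (x i) (y $ i) - z' \<le> ?f (\<not> x i) (yt (\<not> x i) $ i)" for z'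
    using that balance not_both nonneg by linarith
  show "y $ i \<in> feas g i (x i) \<and> 0 \<le> (zet True + zet False) $ i \<and>
     is_minimizer f g i (x i) (minus_i y i) (y $ i) \<and>
     (\<exists>yx. is_minimizer f g i (\<not> x i) (minus_i y i) yx \<and>
        ?f (x i) (y $ i) - (zet True + zet False) $ i \<le> ?f (\<not> x i) yx \<and>
        (\<forall>z'. 0 \<le> z' \<and> ?f (x i) (y $ i) - z' \<le> ?f (\<not> x i) yx
               \<longrightarrow> (zet True + zet False) $ i \<le> z'))"
    using min[of "x i"] min[of "\<not> x i"] y_active zeta nonneg balance least
    by (auto simp: is_minimizer_def)
qed

lemma P_feasible_if_binary_quasi_eq:
  fixes f :: "'p::finite \<Rightarrow> bool \<Rightarrow> real^'m \<Rightarrow> real^'m^'p \<Rightarrow> real"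
    and g :: "'p \<Rightarrow> bool \<Rightarrow> real^'m \<Rightarrow> real^'k"
  assumes "A1 f g" and large: "K_large f g K" and eq: "binary_quasi_eq f g x y zeta"
  shows "\<exists>yt lam kap zet. P_feasible f g K x y yt lam kap zet"
proof -
  obtain yx where yx: "\<And>i. is_minimizer f g i (\<not> x i) (minus_i y i) (yx i)"
    using eq unfolding binary_quasi_eq_def by metis
  have y_min: "is_minimizer f g i (x i) (minus_i y i) (y $ i)" for i
    using eq unfolding binary_quasi_eq_def by blast
  have y_feas: "\<forall>j. \<exists>c. y $ j \<in> feas g j c"
    using eq unfolding binary_quasi_eq_def by blast
  define yt where "yt b = (\<chi> i. if b = x i then y $ i else yx i)" for b
  have yt_min: "is_minimizer f g i b (minus_i y i) (yt b $ i)" for b i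
    using y_min yx by (cases "b = x i") (auto simp: yt_def)
  have "\<forall>b i. \<exists>l. kkt f g i b (minus_i y i) (yt b $ i) l"
    using \<open>A1 f g\<close> yt_min unfolding A1_def by blast
  then obtain L where L: "\<And>b i. kkt f g i b (minus_i y i) (yt b $ i) (L b i)"
    by metis
  define e where "e i = f i (x i) (y $ i) (minus_i y i) - f i (\<not> x i) (yx i) (minus_i y i)" for i
  define kap where "kap b = (\<chi> i. if b = x i then max 0 (- e i) else 0)" for b
  define zet where "zet b = (\<chi> i. if b = x i then max 0 (e i) else 0)" for b
  have e_small: "\<bar>e i\<bar> < K" for i
    using large y_feas y_min[of i] yx[of i]
    unfolding K_large_def e_def is_minimizer_def by blast
  have spread: "\<bar>yt b $ i $ l - y $ i $ l\<bar> \<le> K" for b i l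
  proof -
    obtain c where "y $ i \<in> feas g i c" using y_feas by blast
    moreover have "yt b $ i \<in> feas g i b" using yt_min by (simp add: is_minimizer_def)
    ultimately show ?thesis using large unfolding K_large_def by (meson less_imp_le)
  qed
  have "P_feasible f g K x y yt (\<lambda>b. \<chi> i. L b i) kap zet"
  proof (rule P_feasibleI)
    show "kap (x i) $ i + zet (x i) $ i \<le> K" for i
      using e_small[of i] by (simp add: kap_def zet_def)
    show "f i (x i) (y $ i) (minus_i y i) - zet (x i) $ i =
          f i (\<not> x i) (yt (\<not> x i) $ i) (minus_i y i) - kap (x i) $ i" for i
      by (simp add: kap_def zet_def yt_def e_def)
  qed (use L spread in \<open>auto simp: yt_def kap_def zet_def\<close>)
  then show ?thesis by blast
qed

theorem theorem2:
  fixes f :: "'p::finite \<Rightarrow> bool \<Rightarrow> real^'m \<Rightarrow> real^'m^'p \<Rightarrow> real"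
    and g :: "'p \<Rightarrow> bool \<Rightarrow> real^'m \<Rightarrow> real^'k"
    and F :: "('p \<Rightarrow> bool) \<Rightarrow> real^'m^'p \<Rightarrow> real"
    and G :: "real^'p \<Rightarrow> real^'p \<Rightarrow> real"
    and K :: real
  assumes "A1 f g" and "A2 F G" and "K_large f g K"
  shows "(\<forall>x y yt lam kap zet. P_optimal f g K F G x y yt lam kap zet \<longrightarrow>
            binary_quasi_eq f g x y (zet True + zet False)) \<and>
         (\<forall>x y zeta. binary_quasi_eq f g x y zeta \<longrightarrow>
            (\<exists>yt lam kap zet. P_feasible f g K x y yt lam kap zet))"
  using binary_quasi_eq_if_P_optimal[OF assms(1,2)]
    P_feasible_if_binary_quasi_eq[OF assms(1,3)]
  by blast

end
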